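(* Let $k$ be a field, $X$ a set, and $S\subseteq GDNP(X)$. Let $\varphi:GDNP(X)\to C(X)$ be the GDN-Poisson algebra homomorphism induced by $a\mapsto a$ ($a\in X$), where $C(X)$ is regarded as a GDN-Poisson algebra via $x\circ y=x\ast Dy$. Then the GDN-Poisson algebra $GDNP(X|S)=GDNP(X)/Id(S)$ embeds into $C(X|\varphi(S))$: the GDN-Poisson algebra homomorphism $GDNP(X|S)\to C(X|\varphi(S))$ induced by $a\mapsto a$ is injective.
   Context: A GDN-Poisson algebra is a vector space $\mathcal A$ with bilinear products $\cdot,\circ$ such that $(\mathcal A,\cdot)$ is commutative associative with unit $e$, $(\mathcal A,\circ)$ satisfies $x\circ(y\circ z)-(x\circ y)\circ z=y\circ(x\circ z)-(y\circ x)\circ z$ and $(x\circ y)\circ z=(x\circ z)\circ y$, and $(x\cdot y)\circ z=x\cdot(y\circ z)$, $(x\circ y)\cdot z-x\circ(y\cdot z)=(y\circ x)\cdot z-y\circ(x\cdot z)$. $GDNP(X)$ is the free GDN-Poisson algebra on $X$, and $Id(S)$ its ideal generated by $S$. A special GDN-Poisson admissible algebra $(\mathcal A,\cdot,\ast,D)$ is a vector space with bilinear products $\cdot,\ast$ and a linear map $D$ such that $(\mathcal A,\cdot)$ is commutative associative with unit $e$, $(\mathcal A,\ast)$ is commutative associative, and $(x\cdot y)\ast z=x\cdot(y\ast z)$, $D(x\ast y)=(Dx)\ast y+x\ast(Dy)$, $D(x\cdot y)=(Dx)\cdot y+x\cdot(Dy)-x\cdot y\cdot(De)$. $C(X)$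 denotes the free such algebra generated by $X$; for $R\subseteq C(X)$, $C(X|R)=C(X)/Id[R]$ where $Id[R]$ is the ideal of $C(X)$ (closed under $\cdot,\ast,D$) generated by $R$. With $x\circ y:=x\ast Dy$, any such algebra is a GDN-Poisson algebra. *)

theory Defs
  imports Main
begin

datatype ('k, 'x) gterm =
    GV 'x | G0 | GE | GAdd "('k,'x) gterm" "('k,'x) gterm" | GSm 'k "('k,'x) gterm"
  | GDot "('k,'x) gterm" "('k,'x) gterm" | GCirc "('k,'x) gterm" "('k,'x) gterm"

definition gsub :: "('k::field,'x) gterm \<Rightarrow> ('k,'x) gterm \<Rightarrow> ('k,'x) gterm" where
  "gsub t u = GAdd t (GSm (-1) u)"

text \<open>gcong S t u: t and u are equal in GDNP(X|S) = GDNP(X)/Id(S), i.e. the smallest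
  congruence containing all instances of the defining identities of GDN-Poisson algebras
  (vector space, bilinearity, the algebra identities) and identifying every s in S with 0.
  With S = {} this is equality in the free GDN-Poisson algebra GDNP(X).\<close>
inductive gcong :: "('k::field,'x) gterm set \<Rightarrow> ('k,'x) gterm \<Rightarrow> ('k,'x) gterm \<Rightarrow> bool"
  for S where
  g_refl: "gcong S t t"
| g_sym: "gcong S t u \<Longrightarrow> gcong S u t"
| g_trans: "gcong S t u \<Longrightarrow> gcong S u v \<Longrightarrow> gcong S t v"
| g_add: "gcong S t t' \<Longrightarrow> gcong S u u' \<Longrightarrow> gcong S (GAdd t u) (GAdd t' u')"
| g_sm: "gcong S t t' \<Longrightarrow> gcong S (GSm a t) (GSm a t')"
| g_dot: "gcong S t t' \<Longrightarrow> gcong S u u' \<Longrightarrow> gcong S (GDot t u) (GDot t' u')"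
| g_circ: "gcong S t t' \<Longrightarrow> gcong S u u' \<Longrightarrow> gcong S (GCirc t u) (GCirc t' u')"
| g_add_assoc: "gcong S (GAdd (GAdd t u) v) (GAdd t (GAdd u v))"
| g_add_comm: "gcong S (GAdd t u) (GAdd u t)"
| g_add_zero: "gcong S (GAdd t G0) t"
| g_add_inv: "gcong S (GAdd t (GSm (-1) t)) G0"
| g_sm_sm: "gcong S (GSm a (GSm b t)) (GSm (a * b) t)"
| g_sm_one: "gcong S (GSm 1 t) t"
| g_sm_add: "gcong S (GSm a (GAdd t u)) (GAdd (GSm a t) (GSm a u))"
| g_add_sm: "gcong S (GSm (a + b) t) (GAdd (GSm a t) (GSm b t))"
| g_dot_addl: "gcong S (GDot (GAdd t u) v) (GAdd (GDot t v) (GDot u v))"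
| g_dot_addr: "gcong S (GDot t (GAdd u v)) (GAdd (GDot t u) (GDot t v))"
| g_dot_sml: "gcong S (GDot (GSm a t) u) (GSm a (GDot t u))"
| g_dot_smr: "gcong S (GDot t (GSm a u)) (GSm a (GDot t u))"
| g_circ_addl: "gcong S (GCirc (GAdd t u) v) (GAdd (GCirc t v) (GCirc u v))"
| g_circ_addr: "gcong S (GCirc t (GAdd u v)) (GAdd (GCirc t u) (GCirc t v))"
| g_circ_sml: "gcong S (GCirc (GSm a t) u) (GSm a (GCirc t u))"
| g_circ_smr: "gcong S (GCirc t (GSm a u)) (GSm a (GCirc t u))"
| g_dot_comm: "gcong S (GDot x y) (GDot y x)"
| g_dot_assoc: "gcong S (GDot (GDot x y) z) (GDot x (GDot y z))"
| g_dot_unit: "gcong S (GDot GE x) x"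
| g_leftsym: "gcong S (gsub (GCirc x (GCirc y z)) (GCirc (GCirc x y) z))
                      (gsub (GCirc y (GCirc x z)) (GCirc (GCirc y x) z))"
| g_rightcomm: "gcong S (GCirc (GCirc x y) z) (GCirc (GCirc x z) y)"
| g_comp1: "gcong S (GCirc (GDot x y) z) (GDot x (GCirc y z))"
| g_comp2: "gcong S (gsub (GDot (GCirc x y) z) (GCirc x (GDot y z)))
                    (gsub (GDot (GCirc y x) z) (GCirc y (GDot x z)))"
| g_gen: "s \<in> S \<Longrightarrow> gcong S s G0"

datatype ('k, 'x) cterm =
    CV 'x | C0 | CE | CAdd "('k,'x) cterm" "('k,'x) cterm" | CSm 'k "('k,'x) cterm"
  | CDot "('k,'x) cterm" "('k,'x) cterm" | CStar "('k,'x) cterm" "('k,'x) cterm"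
  | CD "('k,'x) cterm"

definition csub :: "('k::field,'x) cterm \<Rightarrow> ('k,'x) cterm \<Rightarrow> ('k,'x) cterm" where
  "csub t u = CAdd t (CSm (-1) u)"

text \<open>ccong R t u: t and u are equal in C(X|R) = C(X)/Id[R], where Id[R] is the ideal
  closed under dot, star and D generated by R.  With R = {} this is equality in C(X).\<close>
inductive ccong :: "('k::field,'x) cterm set \<Rightarrow> ('k,'x) cterm \<Rightarrow> ('k,'x) cterm \<Rightarrow> bool"
  for R where
  c_refl: "ccong R t t"
| c_sym: "ccong R t u \<Longrightarrow> ccong R u t"
| c_trans: "ccong R t u \<Longrightarrow> ccong R u v \<Longrightarrow> ccong R t v"
| c_add: "ccong R t t' \<Longrightarrow> ccong R u u' \<Longrightarrow> ccong R (CAdd t u) (CAdd t' u')"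
| c_sm: "ccong R t t' \<Longrightarrow> ccong R (CSm a t) (CSm a t')"
| c_dot: "ccong R t t' \<Longrightarrow> ccong R u u' \<Longrightarrow> ccong R (CDot t u) (CDot t' u')"
| c_star: "ccong R t t' \<Longrightarrow> ccong R u u' \<Longrightarrow> ccong R (CStar t u) (CStar t' u')"
| c_D: "ccong R t t' \<Longrightarrow> ccong R (CD t) (CD t')"
| c_add_assoc: "ccong R (CAdd (CAdd t u) v) (CAdd t (CAdd u v))"
| c_add_comm: "ccong R (CAdd t u) (CAdd u t)"
| c_add_zero: "ccong R (CAdd t C0) t"
| c_add_inv: "ccong R (CAdd t (CSm (-1) t)) C0"
| c_sm_sm: "ccong R (CSm a (CSm b t)) (CSm (a * b) t)"
| c_sm_one: "ccong R (CSm 1 t) t"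
| c_sm_add: "ccong R (CSm a (CAdd t u)) (CAdd (CSm a t) (CSm a u))"
| c_add_sm: "ccong R (CSm (a + b) t) (CAdd (CSm a t) (CSm b t))"
| c_dot_addl: "ccong R (CDot (CAdd t u) v) (CAdd (CDot t v) (CDot u v))"
| c_dot_addr: "ccong R (CDot t (CAdd u v)) (CAdd (CDot t u) (CDot t v))"
| c_dot_sml: "ccong R (CDot (CSm a t) u) (CSm a (CDot t u))"
| c_dot_smr: "ccong R (CDot t (CSm a u)) (CSm a (CDot t u))"
| c_star_addl: "ccong R (CStar (CAdd t u) v) (CAdd (CStar t v) (CStar u v))"
| c_star_addr: "ccong R (CStar t (CAdd u v)) (CAdd (CStar t u) (CStar t v))"
| c_star_sml: "ccong R (CStar (CSm a t) u) (CSm a (CStar t u))"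
| c_star_smr: "ccong R (CStar t (CSm a u)) (CSm a (CStar t u))"
| c_D_add: "ccong R (CD (CAdd t u)) (CAdd (CD t) (CD u))"
| c_D_sm: "ccong R (CD (CSm a t)) (CSm a (CD t))"
| c_dot_comm: "ccong R (CDot x y) (CDot y x)"
| c_dot_assoc: "ccong R (CDot (CDot x y) z) (CDot x (CDot y z))"
| c_dot_unit: "ccong R (CDot CE x) x"
| c_star_comm: "ccong R (CStar x y) (CStar y x)"
| c_star_assoc: "ccong R (CStar (CStar x y) z) (CStar x (CStar y z))"
| c_comp: "ccong R (CStar (CDot x y) z) (CDot x (CStar y z))"
| c_D_star: "ccong R (CD (CStar x y)) (CAdd (CStar (CD x) y) (CStar x (CD y)))"
| c_D_dot: "ccong R (CD (CDot x y))
                    (csub (CAdd (CDot (CD x) y) (CDot x (CD y))) (CDot (CDot x y) (CD CE)))"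
| c_gen: "r \<in> R \<Longrightarrow> ccong R r C0"

primrec phi :: "('k,'x) gterm \<Rightarrow> ('k,'x) cterm" where
  "phi (GV a) = CV a"
| "phi G0 = C0"
| "phi GE = CE"
| "phi (GAdd t u) = CAdd (phi t) (phi u)"
| "phi (GSm a t) = CSm a (phi t)"
| "phi (GDot t u) = CDot (phi t) (phi u)"
| "phi (GCirc t u) = CStar (phi t) (CD (phi u))"

end

theory Submission
  imports Defs "HOL-Computational_Algebra.Formal_Laurent_Series"
begin

text \<open>
  In a GDN-Poisson algebra A one has x \<circ> y = x \<cdot> \<partial>y with \<partial>y = e \<circ> y, and
  \<partial>(xy) = \<partial>x y + x \<partial>y - xy \<partial>e, so \<delta> = \<partial> - \<partial>e \<cdot> (-) is a derivation of (A, \<cdot>).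
  On Laurent series A((X)) put p \<ast> q = pqX and D p = X\<inverse> (\<delta>p + gXp' + gp) with g = \<partial>e,
  \<delta> acting on coefficients.  This is a special GDN-Poisson admissible algebra with
  a \<ast> D b = a \<circ> b for constants a, b, so interpreting C(X) in it with generators sent to
  constants maps \<phi>(t) to the constant t.  For A = GDNP(X|S) the relations \<phi>(S) are
  interpreted as 0, hence \<phi>(t) = \<phi>(u) in C(X|\<phi>(S)) gives t = u in A.  As S cannot index
  a type, GDNP(X|S) is taken as the component eP of the product P of all GDNP(X|S'), where
  e is the idempotent supported at S; derivations kill idempotents, so D commutes with e.
\<close>

unbundle fps_syntax

lemma fls_times_nth_lower_bounds:
  fixes f g :: "'a::comm_ring_1 fls"
  assumes f: "\<And>i. i < a \<Longrightarrow> f $$ i = 0" and g: "\<And>j. j < b \<Longrightarrow> g $$ j = 0"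
  shows "(f * g) $$ n = (\<Sum>i=a..n-b. f $$ i * g $$ (n - i))"
proof (cases "f = 0 \<or> g = 0")
  case True
  then show ?thesis by auto
next
  case False
  then have "a \<le> fls_subdegree f" "b \<le> fls_subdegree g"
    using f g nth_fls_subdegree_nonzero by (metis not_le)+
  have "(f * g) $$ n = (\<Sum>i=fls_subdegree f..n - fls_subdegree g. f $$ i * g $$ (n - i))"
    by (rule fls_times_nth(2))
  also have "\<dots> = (\<Sum>i=a..n-b. f $$ i * g $$ (n - i))"
  proof (rule sum.mono_neutral_left)
    show "\<forall>i\<in>{a..n - b} - {fls_subdegree f..n - fls_subdegree g}. f $$ i * g $$ (n - i) = 0"
      by (auto simp: not_le)
  qed (use \<open>a \<le> fls_subdegree f\<close> \<open>b \<le> fls_subdegree g\<close> in auto)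
  finally show ?thesis .
qed

lemma fls_X_inv_times_X: "fls_X_inv * fls_X = (1::'a::comm_ring_1 fls)"
  by (simp add: fls_X_inv_times_conv_shift)

lemma mult_cong_under_factor:
  fixes e :: "'a::comm_ring_1"
  assumes "e * t = e * t'" "e * u = e * u'"
  shows "e * (t * u) = e * (t' * u')"
  by (metis assms mult.assoc mult.commute)

section \<open>A special GDN-Poisson admissible algebra of Laurent series\<close>

text \<open>
  d models y \<mapsto> e \<circ> y on a GDN-Poisson algebra, and scalar the action of the ground field.
\<close>

locale gdn_derivation =
  fixes d :: "'a::comm_ring_1 \<Rightarrow> 'a" and scalar :: "'k::field \<Rightarrow> 'a"
  assumes d_add: "d (x + y) = d x + d y"
    and d_mult: "d (x * y) = d x * y + x * d y - x * y * d 1"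
    and d_scalar: "d (scalar a * x) = scalar a * d x"
    and scalar_add: "scalar (a + b) = scalar a + scalar b"
    and scalar_mult: "scalar (a * b) = scalar a * scalar b"
    and scalar_one: "scalar 1 = 1"
begin

lemma scalar_zero [simp]: "scalar 0 = 0"
  using scalar_add[of 0 0] by simp

lemma scalar_minus_one: "scalar (-1) = -1"
  using scalar_add[of 1 "-1"] by (simp add: scalar_one eq_neg_iff_add_eq_0 add.commute)

definition der :: "'a \<Rightarrow> 'a" where
  "der x = d x - x * d 1"

lemma der_add: "der (x + y) = der x + der y"
  by (simp add: der_def d_add algebra_simps)

lemma der_zero [simp]: "der 0 = 0"
  using der_add[of 0 0] by simp

lemma der_mult: "der (x * y) = der x * y + x * der y"
  by (simp add: der_def d_mult algebra_simps)

lemma der_one [simp]: "der 1 = 0"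
  by (simp add: der_def)

lemma der_sum: "der (sum f A) = (\<Sum>i\<in>A. der (f i))"
  by (induction A rule: infinite_finite_induct) (auto simp: der_add)

lemma der_scalar [simp]: "der (scalar a) = 0"
  using d_scalar[of a 1] by (simp add: der_def)

lemma der_idempotent:
  assumes "e * e = e"
  shows "der e = 0"
proof -
  have der_e: "der e = 2 * e * der e"
    using der_mult[of e e] assms by (simp add: algebra_simps)
  then have "e * der e = 2 * (e * e) * der e"
    by (metis mult.left_commute mult.assoc)
  then have "e * der e = 0"
    using assms by (simp add: algebra_simps)
  with der_e show ?thesis
    by (metis mult.assoc mult_zero_right)
qed

definition der_coeffs :: "'a fls \<Rightarrow> 'a fls" where
  "der_coeffs p = Abs_fls (\<lambda>n. der (p $$ n))"

lemma der_coeffs_nth [simp]: "der_coeffs p $$ n = der (p $$ n)"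
  unfolding der_coeffs_def
proof (rule nth_Abs_fls_ex_nat_lower_bound)
  show "\<exists>m. \<forall>k>m. der (p $$ (- int k)) = 0"
    by (rule exI[of _ "nat (- fls_subdegree p)"]) auto
qed

lemma der_coeffs_add: "der_coeffs (p + q) = der_coeffs p + der_coeffs q"
  by (intro fls_eqI) (simp add: der_add)

lemma der_coeffs_const: "der_coeffs (fls_const c) = fls_const (der c)"
  by (intro fls_eqI) simp

lemma der_coeffs_mult: "der_coeffs (p * q) = der_coeffs p * q + p * der_coeffs q"
proof (intro fls_eqI)
  fix n
  define a b where "a = fls_subdegree p" and "b = fls_subdegree q"
  have p: "\<And>i. i < a \<Longrightarrow> p $$ i = 0" and q: "\<And>i. i < b \<Longrightarrow> q $$ i = 0"
    and p': "\<And>i. i < a \<Longrightarrow> der_coeffs p $$ i = 0" and q': "\<And>i. i < b \<Longrightarrow> der_coeffs q $$ i = 0"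
    by (auto simp: a_def b_def)
  have "der_coeffs (p * q) $$ n = der (\<Sum>i=a..n-b. p $$ i * q $$ (n - i))"
    by (simp add: fls_times_nth_lower_bounds[OF p q])
  also have "\<dots> = (\<Sum>i=a..n-b. der_coeffs p $$ i * q $$ (n - i))
                 + (\<Sum>i=a..n-b. p $$ i * der_coeffs q $$ (n - i))"
    by (simp add: der_sum der_mult sum.distrib)
  also have "\<dots> = (der_coeffs p * q + p * der_coeffs q) $$ n"
    by (simp add: fls_times_nth_lower_bounds[OF p' q] fls_times_nth_lower_bounds[OF p q'])
  finally show "der_coeffs (p * q) $$ n = (der_coeffs p * q + p * der_coeffs q) $$ n" .
qed

definition der_fls :: "'a fls \<Rightarrow> 'a fls" where
  "der_fls p = der_coeffs p + fls_const (d 1) * fls_X * fls_deriv p"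

lemma der_fls_add: "der_fls (p + q) = der_fls p + der_fls q"
  by (simp add: der_fls_def der_coeffs_add algebra_simps)

lemma der_fls_mult: "der_fls (p * q) = der_fls p * q + p * der_fls q"
  by (simp add: der_fls_def der_coeffs_mult algebra_simps)

lemma der_fls_const: "der_fls (fls_const c) = fls_const (der c)"
  by (simp add: der_fls_def der_coeffs_const)

lemma der_fls_X: "der_fls fls_X = fls_const (d 1) * fls_X"
proof -
  have "der_coeffs fls_X = 0"
    by (intro fls_eqI) simp
  then show ?thesis
    by (simp add: der_fls_def)
qed

definition star_fls :: "'a fls \<Rightarrow> 'a fls \<Rightarrow> 'a fls" where
  "star_fls p q = p * q * fls_X"

definition D_fls :: "'a fls \<Rightarrow> 'a fls" where
  "D_fls p = fls_X_inv * (der_fls p + fls_const (d 1) * p)"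

lemma D_fls_add: "D_fls (p + q) = D_fls p + D_fls q"
  by (simp add: D_fls_def der_fls_add algebra_simps)

lemma D_fls_scalar: "D_fls (fls_const (scalar a) * p) = fls_const (scalar a) * D_fls p"
  by (simp add: D_fls_def der_fls_mult der_fls_const algebra_simps)

lemma D_fls_star: "D_fls (star_fls p q) = star_fls (D_fls p) q + star_fls p (D_fls q)"
proof -
  have "D_fls (star_fls p q)
      = (fls_X_inv * fls_X) * (der_fls (p * q) + fls_const (d 1) * (p * q) + fls_const (d 1) * (p * q))"
    by (simp add: D_fls_def star_fls_def der_fls_mult der_fls_X algebra_simps)
  also have "\<dots> = (fls_X_inv * fls_X)
      * ((der_fls p + fls_const (d 1) * p) * q + p * (der_fls q + fls_const (d 1) * q))"
    by (simp only: fls_X_inv_times_X mult_1_left) (simp add: der_fls_mult algebra_simps)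
  also have "\<dots> = star_fls (D_fls p) q + star_fls p (D_fls q)"
    by (simp add: D_fls_def star_fls_def algebra_simps)
  finally show ?thesis .
qed

lemma D_fls_dot: "D_fls (p * q) = D_fls p * q + p * D_fls q - p * q * D_fls 1"
  using der_fls_const[of 1] by (simp add: D_fls_def der_fls_mult algebra_simps)

lemma D_fls_idempotent_factor:
  assumes "e * e = e"
  shows "fls_const e * D_fls p = D_fls (fls_const e * p)"
  by (simp add: D_fls_def der_fls_mult der_fls_const der_idempotent[OF assms] algebra_simps)

primrec cinterp :: "('x \<Rightarrow> 'a) \<Rightarrow> ('k,'x) cterm \<Rightarrow> 'a fls" where
  "cinterp v (CV a) = fls_const (v a)"
| "cinterp v C0 = 0"
| "cinterp v CE = 1"
| "cinterp v (CAdd t u) = cinterp v t + cinterp v u"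
| "cinterp v (CSm a t) = fls_const (scalar a) * cinterp v t"
| "cinterp v (CDot t u) = cinterp v t * cinterp v u"
| "cinterp v (CStar t u) = star_fls (cinterp v t) (cinterp v u)"
| "cinterp v (CD t) = D_fls (cinterp v t)"

lemma ccong_cinterp:
  assumes "ccong R c c'" and idem: "e * e = e"
    and rel: "\<forall>r\<in>R. fls_const e * cinterp v r = 0"
  shows "fls_const e * cinterp v c = fls_const e * cinterp v c'"
  using assms(1)
proof (induction rule: ccong.induct)
  case (c_dot t t' u u')
  then show ?case
    using mult_cong_under_factor by simp
next
  case (c_star t t' u u')
  then have "fls_const e * (cinterp v u * fls_X) = fls_const e * (cinterp v u' * fls_X)"
    by (metis mult.assoc)
  with c_star show ?case
    using mult_cong_under_factor[of "fls_const e" "cinterp v t" "cinterp v t'"]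
    by (simp add: star_fls_def mult.assoc)
next
  case (c_D t t')
  then show ?case
    by (simp add: D_fls_idempotent_factor[OF idem])
next
  case (c_gen r)
  then show ?case
    using rel by simp
next
  case (c_add t t' u u')
  then show ?case
    by (simp add: distrib_left)
next
  case (c_sm t t' a)
  then show ?case
    by (metis cinterp.simps(5) mult.left_commute)
next
  case (c_sm_sm a b t)
  then show ?case
    by (simp add: scalar_mult fls_const_mult_const[symmetric] mult.assoc del: fls_const_mult_const)
next
  case (c_sm_one t)
  then show ?case by (simp add: scalar_one)
next
  case (c_add_sm a b t)
  then show ?case by (simp add: scalar_add fls_plus_const[symmetric] algebra_simps)
next
  case (c_add_inv t)
  then show ?case by (simp add: scalar_minus_one)
next
  case (c_D_add t u)
  then show ?case by (simp add: D_fls_add)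
next
  case (c_D_sm a t)
  then show ?case by (simp add: D_fls_scalar)
next
  case (c_D_star x y)
  then show ?case by (simp add: D_fls_star)
next
  case (c_D_dot x y)
  then show ?case by (simp add: D_fls_dot csub_def scalar_minus_one)
qed (simp_all add: star_fls_def algebra_simps)

end

section \<open>The product of all GDN-Poisson algebras GDNP(X|S)\<close>

primrec augmentation :: "('k::field,'x) gterm \<Rightarrow> 'k" where
  "augmentation (GV a) = 0"
| "augmentation G0 = 0"
| "augmentation GE = 1"
| "augmentation (GAdd t u) = augmentation t + augmentation u"
| "augmentation (GSm a t) = a * augmentation t"
| "augmentation (GDot t u) = augmentation t * augmentation u"
| "augmentation (GCirc t u) = 0"

lemma gcong_augmentation: "gcong {} t u \<Longrightarrow> augmentation t = augmentation u"
  by (induction rule: gcong.induct) (auto simp: gsub_def algebra_simps)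

lemma not_gcong_zero_unit: "\<not> gcong {} (G0::('k::field,'x) gterm) GE"
  using gcong_augmentation by fastforce

definition gcong_all ::
    "(('k::field,'x) gterm set \<Rightarrow> ('k,'x) gterm) \<Rightarrow> (('k,'x) gterm set \<Rightarrow> ('k,'x) gterm) \<Rightarrow> bool"
  where "gcong_all f h \<longleftrightarrow> (\<forall>S. gcong S (f S) (h S))"

lemma equivp_gcong_all: "equivp gcong_all"
proof (rule equivpI)
  show "reflp gcong_all" by (auto simp: reflp_def gcong_all_def intro: g_refl)
  show "symp gcong_all" by (auto simp: symp_def gcong_all_def intro: g_sym)
  show "transp gcong_all" by (auto simp: transp_def gcong_all_def intro: g_trans)
qed

quotient_type (overloaded) ('k, 'x) gdnp_prod =
  "('k::field,'x) gterm set \<Rightarrow> ('k,'x) gterm" / gcong_all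
  by (rule equivp_gcong_all)

lemma g_add_zero_left: "gcong S (GAdd G0 t) t"
  by (rule g_trans[OF g_add_comm g_add_zero])

lemma g_add_inv_left: "gcong S (GAdd (GSm (-1) t) t) G0"
  by (rule g_trans[OF g_add_comm g_add_inv])

lemma g_sm_eq_dot: "gcong S (GSm a t) (GDot (GSm a GE) t)"
  by (rule g_sym, rule g_trans[OF g_dot_sml g_sm[OF g_dot_unit]])

lemma g_sm_unit_mult: "gcong S (GSm (a * b) GE) (GDot (GSm a GE) (GSm b GE))"
  by (rule g_trans[OF g_sym[OF g_sm_sm] g_sm_eq_dot])

instantiation gdnp_prod :: (field, type) comm_ring_1
begin

lift_definition zero_gdnp_prod :: "('a,'b) gdnp_prod" is "\<lambda>S. G0" .

lift_definition one_gdnp_prod :: "('a,'b) gdnp_prod" is "\<lambda>S. GE" .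

lift_definition plus_gdnp_prod :: "('a,'b) gdnp_prod \<Rightarrow> ('a,'b) gdnp_prod \<Rightarrow> ('a,'b) gdnp_prod"
  is "\<lambda>f h S. GAdd (f S) (h S)"
  by (auto simp: gcong_all_def intro: g_add)

lift_definition times_gdnp_prod :: "('a,'b) gdnp_prod \<Rightarrow> ('a,'b) gdnp_prod \<Rightarrow> ('a,'b) gdnp_prod"
  is "\<lambda>f h S. GDot (f S) (h S)"
  by (auto simp: gcong_all_def intro: g_dot)

lift_definition uminus_gdnp_prod :: "('a,'b) gdnp_prod \<Rightarrow> ('a,'b) gdnp_prod"
  is "\<lambda>f S. GSm (-1) (f S)"
  by (auto simp: gcong_all_def intro: g_sm)

lift_definition minus_gdnp_prod :: "('a,'b) gdnp_prod \<Rightarrow> ('a,'b) gdnp_prod \<Rightarrow> ('a,'b) gdnp_prod"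
  is "\<lambda>f h S. GAdd (f S) (GSm (-1) (h S))"
  by (auto simp: gcong_all_def intro: g_add g_sm)

instance
proof
  fix a b c :: "('a,'b) gdnp_prod"
  show "a + b + c = a + (b + c)" by transfer (auto simp: gcong_all_def intro: g_add_assoc)
  show "a + b = b + a" by transfer (auto simp: gcong_all_def intro: g_add_comm)
  show "0 + a = a" by transfer (auto simp: gcong_all_def intro: g_add_zero_left)
  show "- a + a = 0" by transfer (auto simp: gcong_all_def intro: g_add_inv_left)
  show "a - b = a + - b" by transfer (auto simp: gcong_all_def intro: g_refl)
  show "a * b * c = a * (b * c)" by transfer (auto simp: gcong_all_def intro: g_dot_assoc)
  show "a * b = b * a" by transfer (auto simp: gcong_all_def intro: g_dot_comm)
  show "1 * a = a" by transfer (auto simp: gcong_all_def intro: g_dot_unit)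
  show "(a + b) * c = a * c + b * c" by transfer (auto simp: gcong_all_def intro: g_dot_addl)
  show "(0::('a,'b) gdnp_prod) \<noteq> 1"
    by transfer (use not_gcong_zero_unit in \<open>auto simp: gcong_all_def\<close>)
qed

end

lift_definition circ_prod :: "('k::field,'x) gdnp_prod \<Rightarrow> ('k,'x) gdnp_prod \<Rightarrow> ('k,'x) gdnp_prod"
  is "\<lambda>f h S. GCirc (f S) (h S)"
  by (auto simp: gcong_all_def intro: g_circ)

lift_definition scalar_prod :: "'k::field \<Rightarrow> ('k,'x) gdnp_prod"
  is "\<lambda>a S. GSm a GE" .

lift_definition class_prod :: "('k::field,'x) gterm \<Rightarrow> ('k,'x) gdnp_prod"
  is "\<lambda>t S. t" .

lift_definition unit_at :: "('k::field,'x) gterm set \<Rightarrow> ('k,'x) gdnp_prod"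
  is "\<lambda>S0 S. if S = S0 then GE else G0" .

lemma circ_prod_dot_left: "circ_prod (x * y) z = x * circ_prod y z"
  by transfer (auto simp: gcong_all_def intro: g_comp1)

lemma circ_prod_eq_dot: "circ_prod x y = x * circ_prod 1 y"
  using circ_prod_dot_left[of x 1 y] by simp

lemma circ_prod_compat:
  "circ_prod x y * z - circ_prod x (y * z) = circ_prod y x * z - circ_prod y (x * z)"
  by transfer (auto simp: gcong_all_def gsub_def intro: g_comp2[unfolded gsub_def])

lemma circ_prod_unit_mult:
  "circ_prod 1 (x * y) = circ_prod 1 x * y + x * circ_prod 1 y - x * y * circ_prod 1 1"
proof -
  have "circ_prod x 1 * y - circ_prod x (1 * y) = circ_prod 1 x * y - circ_prod 1 (x * y)"
    by (rule circ_prod_compat)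
  then have "x * circ_prod 1 1 * y - x * circ_prod 1 y = circ_prod 1 x * y - circ_prod 1 (x * y)"
    by (simp only: mult_1_left circ_prod_eq_dot[of x])
  then show ?thesis
    by (simp add: algebra_simps)
qed

lemma circ_prod_add_right: "circ_prod x (y + z) = circ_prod x y + circ_prod x z"
  by transfer (auto simp: gcong_all_def intro: g_circ_addr)

lemma circ_prod_scalar_right: "circ_prod x (scalar_prod a * y) = scalar_prod a * circ_prod x y"
  by transfer
    (unfold gcong_all_def,
     blast intro: g_trans[OF g_circ[OF g_refl g_sym[OF g_sm_eq_dot]] g_trans[OF g_circ_smr g_sm_eq_dot]])

interpretation gdnp: gdn_derivation "circ_prod 1" scalar_prod
proof
  fix x y :: "('k::field,'x) gdnp_prod" and a b :: 'k
  show "circ_prod 1 (x + y) = circ_prod 1 x + circ_prod 1 y"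
    by (rule circ_prod_add_right)
  show "circ_prod 1 (x * y) = circ_prod 1 x * y + x * circ_prod 1 y - x * y * circ_prod 1 1"
    by (rule circ_prod_unit_mult)
  show "circ_prod 1 (scalar_prod a * x) = scalar_prod a * circ_prod 1 x"
    by (rule circ_prod_scalar_right)
  show "scalar_prod (a + b) = scalar_prod a + scalar_prod b"
    by transfer (auto simp: gcong_all_def intro: g_add_sm)
  show "scalar_prod (a * b) = scalar_prod a * scalar_prod b"
    by transfer (auto simp: gcong_all_def intro: g_sm_unit_mult)
  show "scalar_prod 1 = 1"
    by transfer (auto simp: gcong_all_def intro: g_sm_one)
qed

lemma class_prod_simps:
  "class_prod G0 = 0"
  "class_prod GE = 1"
  "class_prod (GAdd t u) = class_prod t + class_prod u"
  "class_prod (GSm a t) = scalar_prod a * class_prod t"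
  "class_prod (GDot t u) = class_prod t * class_prod u"
  "class_prod (GCirc t u) = class_prod t * circ_prod 1 (class_prod u)"
proof -
  show "class_prod G0 = 0"
    by transfer (auto simp: gcong_all_def intro: g_refl)
  show "class_prod GE = 1"
    by transfer (auto simp: gcong_all_def intro: g_refl)
  show "class_prod (GAdd t u) = class_prod t + class_prod u"
    by transfer (auto simp: gcong_all_def intro: g_refl)
  show "class_prod (GDot t u) = class_prod t * class_prod u"
    by transfer (auto simp: gcong_all_def intro: g_refl)
  show "class_prod (GSm a t) = scalar_prod a * class_prod t"
    by transfer (auto simp: gcong_all_def intro: g_sm_eq_dot)
  have "class_prod (GCirc t u) = circ_prod (class_prod t) (class_prod u)"
    by transfer (auto simp: gcong_all_def intro: g_refl)
  then show "class_prod (GCirc t u) = class_prod t * circ_prod 1 (class_prod u)"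
    by (rule trans[OF _ circ_prod_eq_dot])
qed

lemma cinterp_phi: "gdnp.cinterp (\<lambda>a. class_prod (GV a)) (phi t) = fls_const (class_prod t)"
proof (induction t)
  case (GCirc t u)
  have "gdnp.cinterp (\<lambda>a. class_prod (GV a)) (phi (GCirc t u)) =
      fls_const (class_prod t)
      * fls_const (gdnp.der (class_prod u) + circ_prod 1 1 * class_prod u) * (fls_X_inv * fls_X)"
    using GCirc by (simp add: gdnp.star_fls_def gdnp.D_fls_def gdnp.der_fls_const
        fls_plus_const[symmetric] algebra_simps)
  also have "\<dots> = fls_const (class_prod (GCirc t u))"
    by (simp add: fls_X_inv_times_X gdnp.der_def class_prod_simps)
  finally show ?case .
qed (auto simp: class_prod_simps fls_plus_const[symmetric])

text \<open>0 \<cdot> t = 0 is not a generating identity of gcong, but it holds in any ring.\<close>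

lemma g_dot_zero_left:
  fixes t :: "('k::field,'x) gterm"
  shows "gcong S (GDot G0 t) G0"
proof -
  have "(0::('k::field,'x) gdnp_prod) * class_prod t = 0"
    by simp
  then have "\<forall>S. gcong S (GDot G0 t) G0"
    by transfer (simp add: gcong_all_def)
  then show ?thesis by simp
qed

lemma unit_at_idempotent: "unit_at S * unit_at S = unit_at S"
  by transfer (auto simp: gcong_all_def intro: g_dot_unit g_dot_zero_left)

lemma unit_at_annihilates: "s \<in> S \<Longrightarrow> unit_at S * class_prod s = 0"
  by transfer (auto simp: gcong_all_def intro: g_dot_zero_left g_trans[OF g_dot_unit g_gen])

lemma unit_at_class_prod_eqD:
  assumes "unit_at S * class_prod t = unit_at S * class_prod u"
  shows "gcong S t u"
proof -
  have "\<forall>S'. gcong S' (GDot (if S' = S then GE else G0) t) (GDot (if S' = S then GE else G0) u)"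
    using assms by transfer (simp add: gcong_all_def)
  then have "gcong S (GDot GE t) (GDot GE u)"
    by (metis (full_types))
  then show ?thesis
    by (blast intro: g_trans[OF g_sym[OF g_dot_unit] g_trans[OF _ g_dot_unit]])
qed

theorem mainTheorem2:
  fixes S :: "('k::field, 'x) gterm set"
  shows "\<forall>t u. ccong (phi ` S) (phi t) (phi u) \<longrightarrow> gcong S t u"
proof (intro allI impI)
  fix t u
  assume "ccong (phi ` S) (phi t) (phi u)"
  then have "fls_const (unit_at S) * gdnp.cinterp (\<lambda>a. class_prod (GV a)) (phi t)
           = fls_const (unit_at S) * gdnp.cinterp (\<lambda>a. class_prod (GV a)) (phi u)"
    by (rule gdnp.ccong_cinterp[OF _ unit_at_idempotent])
      (auto simp: cinterp_phi unit_at_annihilates)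
  then have "fls_const (unit_at S * class_prod t) $$ 0 = fls_const (unit_at S * class_prod u) $$ 0"
    by (simp add: cinterp_phi)
  then show "gcong S t u"
    by (simp add: unit_at_class_prod_eqD)
qed

end
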